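(* Fix $z\in\{0,1\}$ and consider the program (P$_c$): minimize $\sum_{ij:Z_{ij}=z}c_{ij}\psi(w_{ij})$ over weights on the study units with $Z_{ij}=z$, subject to $\bigl|\sum_{ij:Z_{ij}=z}w_{ij}B_k(X_{ij})-B^*_k\bigr|\le\delta_k$ for $k=1,\dots,K$ and $w_{ij}\ge0$. Then: (a) The Lagrange dual problem of (P$_c$) is equivalent to the $L_1$-regularized empirical loss minimization $\min_{u\ge0,\lambda\in\mathbb{R}^K}\ \sum_{ij\in\mathcal{Q}}\bigl[-1\{Z_{ij}=z\}S_{ij}c_{ij}\rho\{(B(X_{ij})^\top\lambda-u_{ij})/c_{ij}\}\bigr]+(B^* )^\top\lambda+|\lambda|^\top\delta$. (b) If $\hat w^{*+}_z$ and $\lambda^\dagger_z$ are solutions of the primal problem (P$_c$) and of the dual problem in (a) respectively, then for every $ij$ with $Z_{ij}=z$ (in the study sample), $\hat w^{*+}_{z,ij}=\rho'\{B(X_{ij})^\top\lambda^\dagger_z/c_{ij}\}\,1\bigl[\rho'\{B(X_{ij})^\top\lambda^\dagger_z/c_{ij}\}>0\bigr]$.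
   Context: The combined sample consists of $n$ study units and $n^*$ target units; $\sum_{ij\in\mathcal{Q}}$ sums over all of them and $S_{ij}=1$ for study units, $S_{ij}=0$ for target units. Study unit $ij$ has binary treatment $Z_{ij}$ and covariates $X_{ij}$; all sums $\sum_{ij:Z_{ij}=z}$ are over study units. $B=(B_1,\dots,B_K)^\top$ are basis functions with $B_1\equiv1$; $B^*=(n^* )^{-1}\sum_{\text{target units}}B(X_{ij})$; $\delta=(\delta_k)$ with $\delta_k\ge0$, $\delta_1=0$; $|\lambda|$ is the componentwise absolute value. $c_{ij}>0$ are scaling factors. $\psi$ is convex, twice differentiable, with $\psi'$ invertible. Let $h(x)=\psi(-x)$ and $\rho(v)=-v(h')^{-1}(v)+h\{(h')^{-1}(v)\}$, so that $\rho'(v)=-(h')^{-1}(v)$. *)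

theory Defs
  imports "HOL-Analysis.Analysis"
begin

text \<open>Units of the combined sample Q are of type 'u; S i = True for study units.
  B k x is the k-th basis function (k = 1..K), dpsi is the derivative of psi.\<close>

definition study_z :: "'u set \<Rightarrow> ('u \<Rightarrow> bool) \<Rightarrow> ('u \<Rightarrow> nat) \<Rightarrow> nat \<Rightarrow> 'u set" where
  "study_z Q S Z z = {i \<in> Q. S i \<and> Z i = z}"

definition Bstar :: "'u set \<Rightarrow> ('u \<Rightarrow> bool) \<Rightarrow> (nat \<Rightarrow> 'x \<Rightarrow> real) \<Rightarrow> ('u \<Rightarrow> 'x) \<Rightarrow> nat \<Rightarrow> real" where
  "Bstar Q S B X k = (\<Sum>i\<in>{i\<in>Q. \<not> S i}. B k (X i)) / real (card {i\<in>Q. \<not> S i})"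

definition h_fun :: "(real \<Rightarrow> real) \<Rightarrow> real \<Rightarrow> real" where
  "h_fun psi x = psi (- x)"

definition h_deriv :: "(real \<Rightarrow> real) \<Rightarrow> real \<Rightarrow> real" where
  "h_deriv dpsi x = - dpsi (- x)"

definition h_deriv_inv :: "(real \<Rightarrow> real) \<Rightarrow> real \<Rightarrow> real" where
  "h_deriv_inv dpsi v = inv (h_deriv dpsi) v"

definition rho :: "(real \<Rightarrow> real) \<Rightarrow> (real \<Rightarrow> real) \<Rightarrow> real \<Rightarrow> real" where
  "rho psi dpsi v = - v * h_deriv_inv dpsi v + h_fun psi (h_deriv_inv dpsi v)"

definition rho_deriv :: "(real \<Rightarrow> real) \<Rightarrow> real \<Rightarrow> real" where
  "rho_deriv dpsi v = - h_deriv_inv dpsi v"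

definition primal_obj :: "'u set \<Rightarrow> ('u \<Rightarrow> real) \<Rightarrow> (real \<Rightarrow> real) \<Rightarrow> ('u \<Rightarrow> real) \<Rightarrow> real" where
  "primal_obj I c psi w = (\<Sum>i\<in>I. c i * psi (w i))"

definition bal :: "'u set \<Rightarrow> (nat \<Rightarrow> 'x \<Rightarrow> real) \<Rightarrow> ('u \<Rightarrow> 'x) \<Rightarrow> ('u \<Rightarrow> real) \<Rightarrow> nat \<Rightarrow> real" where
  "bal I B X w k = (\<Sum>i\<in>I. w i * B k (X i))"

definition primal_feasible :: "'u set \<Rightarrow> (nat \<Rightarrow> 'x \<Rightarrow> real) \<Rightarrow> ('u \<Rightarrow> 'x) \<Rightarrow> (nat \<Rightarrow> real)
    \<Rightarrow> nat \<Rightarrow> (nat \<Rightarrow> real) \<Rightarrow> ('u \<Rightarrow> real) \<Rightarrow> bool" where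
  "primal_feasible I B X Bs K \<delta> w \<longleftrightarrow>
     (\<forall>k\<in>{1..K}. \<bar>bal I B X w k - Bs k\<bar> \<le> \<delta> k) \<and> (\<forall>i\<in>I. w i \<ge> 0)"

definition primal_solution :: "'u set \<Rightarrow> ('u \<Rightarrow> real) \<Rightarrow> (real \<Rightarrow> real) \<Rightarrow> (nat \<Rightarrow> 'x \<Rightarrow> real)
    \<Rightarrow> ('u \<Rightarrow> 'x) \<Rightarrow> (nat \<Rightarrow> real) \<Rightarrow> nat \<Rightarrow> (nat \<Rightarrow> real) \<Rightarrow> ('u \<Rightarrow> real) \<Rightarrow> bool" where
  "primal_solution I c psi B X Bs K \<delta> w \<longleftrightarrow>
     primal_feasible I B X Bs K \<delta> w \<and>
     (\<forall>w'. primal_feasible I B X Bs K \<delta> w' \<longrightarrow> primal_obj I c psi w \<le> primal_obj I c psi w')"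

text \<open>Lagrangian: each constraint |bal_k - B*_k| <= delta_k is split into
  bal_k - B*_k - delta_k <= 0 (multiplier alpha_k) and B*_k - bal_k - delta_k <= 0
  (multiplier beta_k); the constraint w_i >= 0 gets multiplier u_i.\<close>

definition lagrangian :: "'u set \<Rightarrow> ('u \<Rightarrow> real) \<Rightarrow> (real \<Rightarrow> real) \<Rightarrow> (nat \<Rightarrow> 'x \<Rightarrow> real)
    \<Rightarrow> ('u \<Rightarrow> 'x) \<Rightarrow> (nat \<Rightarrow> real) \<Rightarrow> nat \<Rightarrow> (nat \<Rightarrow> real) \<Rightarrow> ('u \<Rightarrow> real)
    \<Rightarrow> (nat \<Rightarrow> real) \<Rightarrow> (nat \<Rightarrow> real) \<Rightarrow> ('u \<Rightarrow> real) \<Rightarrow> real" where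
  "lagrangian I c psi B X Bs K \<delta> w \<alpha> \<beta> u =
     primal_obj I c psi w
     + (\<Sum>k\<in>{1..K}. \<alpha> k * (bal I B X w k - Bs k - \<delta> k))
     + (\<Sum>k\<in>{1..K}. \<beta> k * (Bs k - bal I B X w k - \<delta> k))
     - (\<Sum>i\<in>I. u i * w i)"

definition dual_fun :: "'u set \<Rightarrow> ('u \<Rightarrow> real) \<Rightarrow> (real \<Rightarrow> real) \<Rightarrow> (nat \<Rightarrow> 'x \<Rightarrow> real)
    \<Rightarrow> ('u \<Rightarrow> 'x) \<Rightarrow> (nat \<Rightarrow> real) \<Rightarrow> nat \<Rightarrow> (nat \<Rightarrow> real)
    \<Rightarrow> (nat \<Rightarrow> real) \<Rightarrow> (nat \<Rightarrow> real) \<Rightarrow> ('u \<Rightarrow> real) \<Rightarrow> ereal" where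
  "dual_fun I c psi B X Bs K \<delta> \<alpha> \<beta> u =
     (INF w. ereal (lagrangian I c psi B X Bs K \<delta> w \<alpha> \<beta> u))"

definition dual_feasible :: "'u set \<Rightarrow> nat \<Rightarrow> (nat \<Rightarrow> real) \<Rightarrow> (nat \<Rightarrow> real) \<Rightarrow> ('u \<Rightarrow> real) \<Rightarrow> bool" where
  "dual_feasible I K \<alpha> \<beta> u \<longleftrightarrow>
     (\<forall>k\<in>{1..K}. \<alpha> k \<ge> 0 \<and> \<beta> k \<ge> 0) \<and> (\<forall>i\<in>I. u i \<ge> 0)"

definition dual_solution :: "'u set \<Rightarrow> ('u \<Rightarrow> real) \<Rightarrow> (real \<Rightarrow> real) \<Rightarrow> (nat \<Rightarrow> 'x \<Rightarrow> real)
    \<Rightarrow> ('u \<Rightarrow> 'x) \<Rightarrow> (nat \<Rightarrow> real) \<Rightarrow> nat \<Rightarrow> (nat \<Rightarrow> real)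
    \<Rightarrow> (nat \<Rightarrow> real) \<Rightarrow> (nat \<Rightarrow> real) \<Rightarrow> ('u \<Rightarrow> real) \<Rightarrow> bool" where
  "dual_solution I c psi B X Bs K \<delta> \<alpha> \<beta> u \<longleftrightarrow>
     dual_feasible I K \<alpha> \<beta> u \<and>
     (\<forall>\<alpha>' \<beta>' u'. dual_feasible I K \<alpha>' \<beta>' u' \<longrightarrow>
        dual_fun I c psi B X Bs K \<delta> \<alpha>' \<beta>' u' \<le> dual_fun I c psi B X Bs K \<delta> \<alpha> \<beta> u)"

text \<open>The L1-regularized empirical loss of part (a); u is indexed by all units of Q.\<close>

definition l1_obj :: "'u set \<Rightarrow> ('u \<Rightarrow> bool) \<Rightarrow> ('u \<Rightarrow> nat) \<Rightarrow> nat \<Rightarrow> ('u \<Rightarrow> real)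
    \<Rightarrow> (real \<Rightarrow> real) \<Rightarrow> (real \<Rightarrow> real) \<Rightarrow> (nat \<Rightarrow> 'x \<Rightarrow> real) \<Rightarrow> ('u \<Rightarrow> 'x)
    \<Rightarrow> (nat \<Rightarrow> real) \<Rightarrow> nat \<Rightarrow> (nat \<Rightarrow> real) \<Rightarrow> ('u \<Rightarrow> real) \<Rightarrow> (nat \<Rightarrow> real) \<Rightarrow> real" where
  "l1_obj Q S Z z c psi dpsi B X Bs K \<delta> u lam =
     (\<Sum>i\<in>Q. - (of_bool (Z i = z) * of_bool (S i)) * c i
              * rho psi dpsi (((\<Sum>k\<in>{1..K}. B k (X i) * lam k) - u i) / c i))
     + (\<Sum>k\<in>{1..K}. Bs k * lam k) + (\<Sum>k\<in>{1..K}. \<bar>lam k\<bar> * \<delta> k)"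

definition l1_solution :: "'u set \<Rightarrow> ('u \<Rightarrow> bool) \<Rightarrow> ('u \<Rightarrow> nat) \<Rightarrow> nat \<Rightarrow> ('u \<Rightarrow> real)
    \<Rightarrow> (real \<Rightarrow> real) \<Rightarrow> (real \<Rightarrow> real) \<Rightarrow> (nat \<Rightarrow> 'x \<Rightarrow> real) \<Rightarrow> ('u \<Rightarrow> 'x)
    \<Rightarrow> (nat \<Rightarrow> real) \<Rightarrow> nat \<Rightarrow> (nat \<Rightarrow> real) \<Rightarrow> ('u \<Rightarrow> real) \<Rightarrow> (nat \<Rightarrow> real) \<Rightarrow> bool" where
  "l1_solution Q S Z z c psi dpsi B X Bs K \<delta> u lam \<longleftrightarrow>
     (\<forall>i\<in>Q. u i \<ge> 0) \<and>
     (\<forall>u' lam'. (\<forall>i\<in>Q. u' i \<ge> 0) \<longrightarrow>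
        l1_obj Q S Z z c psi dpsi B X Bs K \<delta> u lam \<le> l1_obj Q S Z z c psi dpsi B X Bs K \<delta> u' lam')"

end

theory Submission
  imports Defs
begin

text \<open>Let \<open>rho v = min\<^sub>w (psi w + v * w)\<close>; the minimum is attained exactly at
  \<open>w = rho' v = psi'\<^sup>-\<^sup>1 (- v)\<close>. For fixed multipliers the Lagrangian of (P_c) separates
  over the units, so the dual function is explicit. Writing \<open>lam = \<alpha> - \<beta>\<close> for the multipliers
  of the two one-sided balance constraints, it is bounded by \<open>reduced_dual lam u\<close>, the
  negative of the L1-regularised loss, with equality when \<open>\<alpha>\<close> and \<open>\<beta>\<close> are the positive and
  negative parts of \<open>lam\<close>; this gives (a).

  For (b), \<open>rho'\<close> is a supergradient of the concave function \<open>rho\<close>, so one-sided perturbations of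
  a maximiser \<open>(lam, u)\<close> of \<open>reduced_dual\<close> yield the KKT conditions for the implied weights
  \<open>rho' (score lam u i)\<close>: they are feasible, complementary to \<open>u\<close>, and the balance constraints are
  active in the direction of \<open>sgn lam\<^sub>k\<close>. Hence these weights attain \<open>reduced_dual lam u\<close>. The duality gap
  of any feasible \<open>w\<close> splits into nonnegative terms, so for a primal solution each per-unit term
  \<open>psi w\<^sub>i + t\<^sub>i w\<^sub>i - rho t\<^sub>i\<close> vanishes, which forces \<open>w\<^sub>i = rho' t\<^sub>i\<close>.\<close>

lemma isCont_mem_closed_from_right:
  fixes g :: "real \<Rightarrow> real"
  assumes "isCont g x" "closed C" "x < y" "\<And>s. x < s \<Longrightarrow> s < y \<Longrightarrow> g s \<in> C"
  shows "g x \<in> C"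
proof (rule Lim_in_closed_set[OF \<open>closed C\<close> _ trivial_limit_at_right_real])
  show "(g \<longlongrightarrow> g x) (at_right x)"
    using \<open>isCont g x\<close> by (simp add: isCont_def filterlim_at_split)
  show "\<forall>\<^sub>F s in at_right x. g s \<in> C"
    using eventually_at_right_real[OF \<open>x < y\<close>] by eventually_elim (simp add: assms(4))
qed

lemma isCont_mem_closed_from_left:
  fixes g :: "real \<Rightarrow> real"
  assumes "isCont g x" "closed C" "y < x" "\<And>s. y < s \<Longrightarrow> s < x \<Longrightarrow> g s \<in> C"
  shows "g x \<in> C"
proof (rule Lim_in_closed_set[OF \<open>closed C\<close> _ trivial_limit_at_left_real])
  show "(g \<longlongrightarrow> g x) (at_left x)"
    using \<open>isCont g x\<close> by (simp add: isCont_def filterlim_at_split)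
  show "\<forall>\<^sub>F s in at_left x. g s \<in> C"
    using eventually_at_left_real[OF \<open>y < x\<close>] by eventually_elim (simp add: assms(4))
qed

lemma first_order_nonneg_constraint:
  fixes g :: "real \<Rightarrow> real"
  assumes cont: "isCont g 0" and "0 \<le> u" and opt: "\<And>s. - u \<le> s \<Longrightarrow> 0 \<le> s * g s"
  shows "0 \<le> g 0 \<and> u * g 0 = 0"
proof
  have "g 0 \<in> {0..}"
  proof (rule isCont_mem_closed_from_right[OF cont closed_atLeast zero_less_one])
    fix s :: real assume "0 < s"
    with opt[of s] \<open>0 \<le> u\<close> show "g s \<in> {0..}" by (simp add: zero_le_mult_iff)
  qed
  then show "0 \<le> g 0" by simp
  show "u * g 0 = 0"
  proof (cases "u = 0")
    case False
    with \<open>0 \<le> u\<close> have "- u < 0" by simp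
    have "g 0 \<in> {..0}"
    proof (rule isCont_mem_closed_from_left[OF cont closed_atMost \<open>- u < 0\<close>])
      fix s :: real assume "- u < s" "s < 0"
      with opt[of s] show "g s \<in> {..0}" by (simp add: zero_le_mult_iff)
    qed
    with \<open>0 \<le> g 0\<close> show ?thesis by simp
  qed simp
qed

text \<open>The conclusion says that \<open>\<phi> 0 - b\<close> is a subgradient of \<open>d * \<bar>_\<bar>\<close> at \<open>l\<close>.\<close>

lemma first_order_abs_penalty:
  fixes \<phi> :: "real \<Rightarrow> real"
  assumes cont: "isCont \<phi> 0" and "0 \<le> d"
    and opt: "\<And>s. s * (\<phi> s - b) \<le> d * (\<bar>l + s\<bar> - \<bar>l\<bar>)"
  shows "\<bar>\<phi> 0 - b\<bar> \<le> d \<and> l * (\<phi> 0 - b) = \<bar>l\<bar> * d"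
proof -
  have upper: "\<phi> 0 \<in> {..b + d}"
  proof (rule isCont_mem_closed_from_right[OF cont closed_atMost zero_less_one])
    fix s :: real assume "0 < s"
    have "d * (\<bar>l + s\<bar> - \<bar>l\<bar>) \<le> d * s"
      using \<open>0 \<le> d\<close> \<open>0 < s\<close> by (intro mult_left_mono) auto
    with opt[of s] have "s * (\<phi> s - b) \<le> s * d" by (simp add: mult.commute)
    with \<open>0 < s\<close> show "\<phi> s \<in> {..b + d}" by simp
  qed
  have lower: "\<phi> 0 \<in> {b - d..}"
  proof (rule isCont_mem_closed_from_left[OF cont closed_atLeast, of "- 1"])
    fix s :: real assume "s < 0"
    have "d * (\<bar>l + s\<bar> - \<bar>l\<bar>) \<le> d * (- s)"
      using \<open>0 \<le> d\<close> \<open>s < 0\<close> by (intro mult_left_mono) auto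
    with opt[of s] have "s * (\<phi> s - b) \<le> s * (- d)" by (simp add: mult.commute)
    with \<open>s < 0\<close> have "- d \<le> \<phi> s - b" by (simp only: mult_le_cancel_left_neg)
    then show "\<phi> s \<in> {b - d..}" by simp
  qed simp
  have pos: "\<phi> 0 \<in> {b + d..}" if "0 < l"
  proof (rule isCont_mem_closed_from_left[OF cont closed_atLeast, of "- l"])
    fix s :: real assume "- l < s" "s < 0"
    then have "s * (\<phi> s - b) \<le> s * d"
      using opt[of s] by (simp add: mult.commute)
    with \<open>s < 0\<close> have "d \<le> \<phi> s - b" by (simp only: mult_le_cancel_left_neg)
    then show "\<phi> s \<in> {b + d..}" by simp
  qed (use that in simp)
  have neg: "\<phi> 0 \<in> {..b - d}" if "l < 0"
  proof (rule isCont_mem_closed_from_right[OF cont closed_atMost, of "- l"])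
    fix s :: real assume "0 < s" "s < - l"
    then have "s * (\<phi> s - b) \<le> s * (- d)"
      using opt[of s] by (simp add: mult.commute)
    with \<open>0 < s\<close> have "\<phi> s - b \<le> - d" by (simp only: mult_le_cancel_left_pos)
    then show "\<phi> s \<in> {..b - d}" by simp
  qed (use that in simp)
  show ?thesis
    using upper lower pos neg by (cases l "0 :: real" rule: linorder_cases) auto
qed

lemma sum_mult_fun_upd_add_diff:
  fixes f g :: "'a \<Rightarrow> real"
  assumes "finite A" "k \<in> A"
  shows "(\<Sum>j\<in>A. f j * ((g(k := g k + s)) j - g j)) = f k * s"
proof -
  have "(\<Sum>j\<in>A. f j * ((g(k := g k + s)) j - g j)) = (\<Sum>j\<in>A. if j = k then f k * s else 0)"
    by (intro sum.cong refl) auto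
  with assms show ?thesis by simp
qed

locale convex_loss =
  fixes psi dpsi :: "real \<Rightarrow> real"
  assumes convex_psi: "convex_on UNIV psi"
    and psi_has_deriv: "\<And>x. (psi has_real_derivative dpsi x) (at x)"
    and bij_dpsi: "bij dpsi"
begin

lemma psi_above_tangent: "dpsi x * (y - x) \<le> psi y - psi x"
  by (rule convex_on_imp_above_tangent[OF convex_psi]) (use psi_has_deriv in auto)

lemma strict_mono_dpsi: "strict_mono dpsi"
proof (rule strict_monoI)
  fix x y :: real assume "x < y"
  have "0 \<le> (dpsi y - dpsi x) * (y - x)"
    using psi_above_tangent[of x y] psi_above_tangent[of y x] by (simp add: algebra_simps)
  with \<open>x < y\<close> have "dpsi x \<le> dpsi y" by (simp add: zero_le_mult_iff)
  moreover have "dpsi x \<noteq> dpsi y"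
    using bij_dpsi \<open>x < y\<close> unfolding bij_def inj_def by auto
  ultimately show "dpsi x < dpsi y" by simp
qed

lemma dpsi_rho_deriv: "dpsi (rho_deriv dpsi v) = - v"
proof -
  have "surj (h_deriv dpsi)"
  proof (rule surjI)
    show "h_deriv dpsi (- inv dpsi (- v')) = v'" for v'
      using bij_dpsi by (simp add: h_deriv_def bij_is_surj surj_f_inv_f)
  qed
  then have "h_deriv dpsi (h_deriv_inv dpsi v) = v"
    by (simp add: h_deriv_inv_def surj_f_inv_f)
  then show ?thesis by (simp add: h_deriv_def rho_deriv_def)
qed

lemma rho_deriv_eqI: "dpsi w = - v \<Longrightarrow> rho_deriv dpsi v = w"
  using strict_mono_eq[OF strict_mono_dpsi, of "rho_deriv dpsi v" w] by (simp add: dpsi_rho_deriv)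

lemma rho_deriv_less_iff: "rho_deriv dpsi v < rho_deriv dpsi v' \<longleftrightarrow> v' < v"
  using strict_mono_less[OF strict_mono_dpsi, of "rho_deriv dpsi v" "rho_deriv dpsi v'"]
  by (simp add: dpsi_rho_deriv)

lemma rho_eq: "rho psi dpsi v = psi (rho_deriv dpsi v) + v * rho_deriv dpsi v"
  by (simp add: rho_def rho_deriv_def h_fun_def)

lemma rho_le: "rho psi dpsi v \<le> psi w + v * w"
  using psi_above_tangent[of "rho_deriv dpsi v" w]
  by (simp add: rho_eq dpsi_rho_deriv algebra_simps)

lemma rho_diff_ge: "(v' - v) * rho_deriv dpsi v' \<le> rho psi dpsi v' - rho psi dpsi v"
  using rho_le[of v "rho_deriv dpsi v'"] by (simp add: rho_eq algebra_simps)

lemma rho_attained_only_at_rho_deriv: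
  assumes "psi w + v * w = rho psi dpsi v"
  shows "w = rho_deriv dpsi v"
proof -
  have "((\<lambda>x. psi x + v * x) has_real_derivative dpsi w + v) (at w)"
    using psi_has_deriv by (auto intro!: derivative_eq_intros)
  moreover have "\<forall>y. \<bar>w - y\<bar> < 1 \<longrightarrow> psi w + v * w \<le> psi y + v * y"
    using assms rho_le by auto
  ultimately have "dpsi w + v = 0"
    by (rule DERIV_local_min[OF _ zero_less_one])
  then show ?thesis by (intro rho_deriv_eqI[symmetric]) simp
qed

lemma isCont_rho_deriv [continuous_intros]:
  assumes "isCont f a"
  shows "isCont (\<lambda>x. rho_deriv dpsi (f x)) a"
proof -
  have "continuous_on UNIV (\<lambda>v. - rho_deriv dpsi v)"
  proof (rule continuous_onI_mono)
    have "- rho_deriv dpsi (- dpsi (- y)) = y" for y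
      using rho_deriv_eqI[of "- y" "- dpsi (- y)"] by simp
    then have "surj (\<lambda>v. - rho_deriv dpsi v)" by (rule surjI)
    then show "open (range (\<lambda>v. - rho_deriv dpsi v))" by simp
    show "- rho_deriv dpsi x \<le> - rho_deriv dpsi y" if "x \<le> y" for x y
      using that rho_deriv_less_iff[of y x] by (cases "x = y") auto
  qed
  then have "isCont (\<lambda>v. - rho_deriv dpsi v) (f a)"
    by (simp add: continuous_on_eq_continuous_at)
  then have "isCont (\<lambda>v. - (- rho_deriv dpsi v)) (f a)"
    by (rule isCont_minus)
  then show ?thesis
    using isCont_o2[OF assms] by simp
qed

end

locale weighting_problem = convex_loss psi dpsi
  for psi dpsi :: "real \<Rightarrow> real" +
  fixes I :: "'u set" and c :: "'u \<Rightarrow> real" and B :: "nat \<Rightarrow> 'x \<Rightarrow> real"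
    and X :: "'u \<Rightarrow> 'x" and Bs :: "nat \<Rightarrow> real" and K :: nat and \<delta> :: "nat \<Rightarrow> real"
  assumes finite_I: "finite I"
    and c_pos: "\<And>i. i \<in> I \<Longrightarrow> 0 < c i"
    and delta_nonneg: "\<And>k. k \<in> {1..K} \<Longrightarrow> 0 \<le> \<delta> k"
begin

definition score :: "(nat \<Rightarrow> real) \<Rightarrow> ('u \<Rightarrow> real) \<Rightarrow> 'u \<Rightarrow> real" where
  "score lam u i = ((\<Sum>k\<in>{1..K}. B k (X i) * lam k) - u i) / c i"

text \<open>The Lagrange dual function with the multipliers of the two one-sided balance constraints
  merged into \<open>lam = \<alpha> - \<beta>\<close>; \<open>l1_obj\<close> is its negative.\<close>

definition reduced_dual :: "(nat \<Rightarrow> real) \<Rightarrow> ('u \<Rightarrow> real) \<Rightarrow> real" where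
  "reduced_dual lam u = (\<Sum>i\<in>I. c i * rho psi dpsi (score lam u i))
     - (\<Sum>k\<in>{1..K}. Bs k * lam k) - (\<Sum>k\<in>{1..K}. \<bar>lam k\<bar> * \<delta> k)"

definition reduced_dual_optimal :: "(nat \<Rightarrow> real) \<Rightarrow> ('u \<Rightarrow> real) \<Rightarrow> bool" where
  "reduced_dual_optimal lam u \<longleftrightarrow> (\<forall>i\<in>I. 0 \<le> u i) \<and>
     (\<forall>lam' u'. (\<forall>i\<in>I. 0 \<le> u' i) \<longrightarrow> reduced_dual lam' u' \<le> reduced_dual lam u)"

abbreviation implied_weights :: "(nat \<Rightarrow> real) \<Rightarrow> ('u \<Rightarrow> real) \<Rightarrow> 'u \<Rightarrow> real" where
  "implied_weights lam u i \<equiv> rho_deriv dpsi (score lam u i)"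

lemma reduced_dual_cong:
  "(\<And>i. i \<in> I \<Longrightarrow> u i = u' i) \<Longrightarrow> reduced_dual lam u = reduced_dual lam u'"
  by (simp add: reduced_dual_def score_def)

lemma score_diff:
  "score lam' u' i - score lam u i
     = ((\<Sum>k\<in>{1..K}. B k (X i) * (lam' k - lam k)) - (u' i - u i)) / c i"
  by (simp add: score_def right_diff_distrib sum_subtractf diff_divide_distrib)

lemma sum_score_mult:
  "(\<Sum>i\<in>I. c i * (score lam u i * w i))
     = (\<Sum>k\<in>{1..K}. lam k * bal I B X w k) - (\<Sum>i\<in>I. u i * w i)"
proof -
  have "(\<Sum>i\<in>I. c i * (score lam u i * w i))
      = (\<Sum>i\<in>I. (\<Sum>k\<in>{1..K}. lam k * (w i * B k (X i))) - u i * w i)"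
  proof (rule sum.cong[OF refl])
    fix i assume "i \<in> I"
    with c_pos have "c i * (score lam u i * w i) = ((\<Sum>k\<in>{1..K}. B k (X i) * lam k) - u i) * w i"
      by (simp add: score_def less_imp_neq[symmetric])
    also have "\<dots> = (\<Sum>k\<in>{1..K}. lam k * (w i * B k (X i))) - u i * w i"
      by (simp add: sum_distrib_left sum_distrib_right left_diff_distrib right_diff_distrib mult_ac)
    finally show "c i * (score lam u i * w i) = \<dots>" .
  qed
  also have "\<dots> = (\<Sum>k\<in>{1..K}. lam k * bal I B X w k) - (\<Sum>i\<in>I. u i * w i)"
    by (simp add: sum_subtractf bal_def sum_distrib_left sum.swap[of _ I])
  finally show ?thesis .
qed

lemma lagrangian_eq:
  "lagrangian I c psi B X Bs K \<delta> w \<alpha> \<beta> u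
     = (\<Sum>i\<in>I. c i * (psi (w i) + score (\<lambda>k. \<alpha> k - \<beta> k) u i * w i))
       - (\<Sum>k\<in>{1..K}. Bs k * (\<alpha> k - \<beta> k)) - (\<Sum>k\<in>{1..K}. (\<alpha> k + \<beta> k) * \<delta> k)"
proof -
  have "(\<Sum>i\<in>I. c i * (psi (w i) + score (\<lambda>k. \<alpha> k - \<beta> k) u i * w i))
      = primal_obj I c psi w + (\<Sum>k\<in>{1..K}. (\<alpha> k - \<beta> k) * bal I B X w k) - (\<Sum>i\<in>I. u i * w i)"
    by (simp add: primal_obj_def distrib_left sum.distrib sum_score_mult)
  moreover have "(\<Sum>k\<in>{1..K}. \<alpha> k * (bal I B X w k - Bs k - \<delta> k))
      + (\<Sum>k\<in>{1..K}. \<beta> k * (Bs k - bal I B X w k - \<delta> k))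
      = (\<Sum>k\<in>{1..K}. (\<alpha> k - \<beta> k) * bal I B X w k) - (\<Sum>k\<in>{1..K}. Bs k * (\<alpha> k - \<beta> k))
        - (\<Sum>k\<in>{1..K}. (\<alpha> k + \<beta> k) * \<delta> k)"
    by (simp add: sum_subtractf[symmetric] sum.distrib[symmetric] algebra_simps)
  ultimately show ?thesis
    by (simp add: lagrangian_def)
qed

lemma dual_fun_eq:
  "dual_fun I c psi B X Bs K \<delta> \<alpha> \<beta> u
     = ereal (reduced_dual (\<lambda>k. \<alpha> k - \<beta> k) u
              + (\<Sum>k\<in>{1..K}. (\<bar>\<alpha> k - \<beta> k\<bar> - (\<alpha> k + \<beta> k)) * \<delta> k))"
proof -
  let ?t = "score (\<lambda>k. \<alpha> k - \<beta> k) u"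
  define V where "V = (\<Sum>i\<in>I. c i * rho psi dpsi (?t i))
    - (\<Sum>k\<in>{1..K}. Bs k * (\<alpha> k - \<beta> k)) - (\<Sum>k\<in>{1..K}. (\<alpha> k + \<beta> k) * \<delta> k)"
  have lower: "V \<le> lagrangian I c psi B X Bs K \<delta> w \<alpha> \<beta> u" for w
  proof -
    have "(\<Sum>i\<in>I. c i * rho psi dpsi (?t i)) \<le> (\<Sum>i\<in>I. c i * (psi (w i) + ?t i * w i))"
      using c_pos by (intro sum_mono mult_left_mono rho_le) (auto simp: less_imp_le)
    then show ?thesis by (simp add: lagrangian_eq V_def)
  qed
  have attained: "lagrangian I c psi B X Bs K \<delta> (\<lambda>i. rho_deriv dpsi (?t i)) \<alpha> \<beta> u = V"
    by (simp add: lagrangian_eq V_def rho_eq)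
  have "dual_fun I c psi B X Bs K \<delta> \<alpha> \<beta> u = ereal V"
    unfolding dual_fun_def
  proof (rule INF_eqI)
    show "ereal V \<le> ereal (lagrangian I c psi B X Bs K \<delta> w \<alpha> \<beta> u)" for w
      using lower by simp
    show "y \<le> ereal V" if "\<And>w. w \<in> UNIV \<Longrightarrow> y \<le> ereal (lagrangian I c psi B X Bs K \<delta> w \<alpha> \<beta> u)" for y
      using that[of "\<lambda>i. rho_deriv dpsi (?t i)"] by (simp add: attained)
  qed
  then show ?thesis
    by (simp add: V_def reduced_dual_def left_diff_distrib sum_subtractf)
qed

lemma dual_fun_le_reduced_dual:
  assumes "dual_feasible I K \<alpha> \<beta> u"
  shows "dual_fun I c psi B X Bs K \<delta> \<alpha> \<beta> u \<le> ereal (reduced_dual (\<lambda>k. \<alpha> k - \<beta> k) u)"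
proof -
  have "(\<Sum>k\<in>{1..K}. (\<bar>\<alpha> k - \<beta> k\<bar> - (\<alpha> k + \<beta> k)) * \<delta> k) \<le> 0"
  proof (rule sum_nonpos)
    fix k assume "k \<in> {1..K}"
    with assms have "0 \<le> \<alpha> k" "0 \<le> \<beta> k" by (auto simp: dual_feasible_def)
    then have "\<bar>\<alpha> k - \<beta> k\<bar> - (\<alpha> k + \<beta> k) \<le> 0" by linarith
    from this delta_nonneg[OF \<open>k \<in> {1..K}\<close>]
    show "(\<bar>\<alpha> k - \<beta> k\<bar> - (\<alpha> k + \<beta> k)) * \<delta> k \<le> 0"
      by (rule mult_nonpos_nonneg)
  qed
  then show ?thesis by (simp add: dual_fun_eq)
qed

lemma dual_fun_pos_neg_parts:
  "dual_fun I c psi B X Bs K \<delta> (\<lambda>k. max (lam k) 0) (\<lambda>k. max (- lam k) 0) u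
     = ereal (reduced_dual lam u)"
proof -
  have "(\<lambda>k. max (lam k) 0 - max (- lam k) 0) = lam" by (auto simp: max_def)
  moreover have "\<bar>max (lam k) 0 - max (- lam k) 0\<bar> - (max (lam k) 0 + max (- lam k) 0) = 0" for k
    by (auto simp: max_def)
  ultimately show ?thesis by (simp add: dual_fun_eq)
qed

lemma dual_feasible_pos_neg_parts:
  "\<forall>i\<in>I. 0 \<le> u i \<Longrightarrow> dual_feasible I K (\<lambda>k. max (lam k) 0) (\<lambda>k. max (- lam k) 0) u"
  by (simp add: dual_feasible_def)

lemma dual_solution_iff:
  "dual_solution I c psi B X Bs K \<delta> \<alpha> \<beta> u \<longleftrightarrow> dual_feasible I K \<alpha> \<beta> u \<and>
     (\<forall>lam u'. (\<forall>i\<in>I. 0 \<le> u' i) \<longrightarrow>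
        ereal (reduced_dual lam u') \<le> dual_fun I c psi B X Bs K \<delta> \<alpha> \<beta> u)"
  (is "_ \<longleftrightarrow> _ \<and> ?bound")
proof -
  have "?bound \<longleftrightarrow> (\<forall>\<alpha>' \<beta>' u'. dual_feasible I K \<alpha>' \<beta>' u' \<longrightarrow>
          dual_fun I c psi B X Bs K \<delta> \<alpha>' \<beta>' u' \<le> dual_fun I c psi B X Bs K \<delta> \<alpha> \<beta> u)"
  proof
    assume ?bound
    show "\<forall>\<alpha>' \<beta>' u'. dual_feasible I K \<alpha>' \<beta>' u' \<longrightarrow>
          dual_fun I c psi B X Bs K \<delta> \<alpha>' \<beta>' u' \<le> dual_fun I c psi B X Bs K \<delta> \<alpha> \<beta> u"
    proof (intro allI impI)
      fix \<alpha>' \<beta>' u' assume "dual_feasible I K \<alpha>' \<beta>' u'"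
      with \<open>?bound\<close> have "ereal (reduced_dual (\<lambda>k. \<alpha>' k - \<beta>' k) u') \<le> dual_fun I c psi B X Bs K \<delta> \<alpha> \<beta> u"
        by (simp add: dual_feasible_def)
      with dual_fun_le_reduced_dual[OF \<open>dual_feasible I K \<alpha>' \<beta>' u'\<close>]
      show "dual_fun I c psi B X Bs K \<delta> \<alpha>' \<beta>' u' \<le> dual_fun I c psi B X Bs K \<delta> \<alpha> \<beta> u"
        by (rule order_trans)
    qed
  qed (use dual_fun_pos_neg_parts dual_feasible_pos_neg_parts in metis)
  then show ?thesis by (simp add: dual_solution_def)
qed

lemma reduced_dual_diff_ge:
  "(\<Sum>i\<in>I. ((\<Sum>k\<in>{1..K}. B k (X i) * (lam' k - lam k)) - (u' i - u i))
             * implied_weights lam' u' i)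
     - (\<Sum>k\<in>{1..K}. Bs k * (lam' k - lam k)) - (\<Sum>k\<in>{1..K}. \<delta> k * (\<bar>lam' k\<bar> - \<bar>lam k\<bar>))
   \<le> reduced_dual lam' u' - reduced_dual lam u"
proof -
  have "(\<Sum>i\<in>I. ((\<Sum>k\<in>{1..K}. B k (X i) * (lam' k - lam k)) - (u' i - u i))
             * implied_weights lam' u' i)
      \<le> (\<Sum>i\<in>I. c i * rho psi dpsi (score lam' u' i) - c i * rho psi dpsi (score lam u i))"
  proof (rule sum_mono)
    fix i assume "i \<in> I"
    then have "0 < c i" by (rule c_pos)
    then have "c i * ((score lam' u' i - score lam u i) * implied_weights lam' u' i)
        \<le> c i * (rho psi dpsi (score lam' u' i) - rho psi dpsi (score lam u i))"
      by (intro mult_left_mono rho_diff_ge) auto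
    with \<open>0 < c i\<close> show "((\<Sum>k\<in>{1..K}. B k (X i) * (lam' k - lam k)) - (u' i - u i))
             * implied_weights lam' u' i
        \<le> c i * rho psi dpsi (score lam' u' i) - c i * rho psi dpsi (score lam u i)"
      by (simp add: score_diff right_diff_distrib)
  qed
  moreover have "(\<Sum>k\<in>{1..K}. Bs k * (lam' k - lam k))
      = (\<Sum>k\<in>{1..K}. Bs k * lam' k) - (\<Sum>k\<in>{1..K}. Bs k * lam k)"
    by (simp add: right_diff_distrib sum_subtractf)
  moreover have "(\<Sum>k\<in>{1..K}. \<delta> k * (\<bar>lam' k\<bar> - \<bar>lam k\<bar>))
      = (\<Sum>k\<in>{1..K}. \<bar>lam' k\<bar> * \<delta> k) - (\<Sum>k\<in>{1..K}. \<bar>lam k\<bar> * \<delta> k)"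
    by (simp add: right_diff_distrib sum_subtractf mult.commute)
  ultimately show ?thesis
    by (simp add: reduced_dual_def sum_subtractf)
qed

lemma reduced_dual_update_u_ge:
  assumes "i \<in> I"
  shows "- s * rho_deriv dpsi (score lam u i - s / c i)
    \<le> reduced_dual lam (u(i := u i + s)) - reduced_dual lam u"
proof -
  have "score lam (u(i := u i + s)) i = score lam u i - s / c i"
    using score_diff[of lam "u(i := u i + s)" i lam u] by simp
  then have "(\<Sum>j\<in>I. ((\<Sum>k\<in>{1..K}. B k (X j) * (lam k - lam k)) - ((u(i := u i + s)) j - u j))
             * implied_weights lam (u(i := u i + s)) j)
      = (\<Sum>j\<in>I. if j = i then - s * rho_deriv dpsi (score lam u i - s / c i) else 0)"
    by (intro sum.cong refl) auto
  also have "\<dots> = - s * rho_deriv dpsi (score lam u i - s / c i)"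
    using finite_I assms by simp
  finally show ?thesis
    using reduced_dual_diff_ge[of lam lam "u(i := u i + s)" u] by simp
qed

lemma reduced_dual_update_lam_ge:
  assumes "k \<in> {1..K}"
  shows "s * (\<Sum>i\<in>I. B k (X i) * rho_deriv dpsi (score lam u i + s * B k (X i) / c i))
      - s * Bs k - \<delta> k * (\<bar>lam k + s\<bar> - \<bar>lam k\<bar>)
    \<le> reduced_dual (lam(k := lam k + s)) u - reduced_dual lam u"
proof -
  let ?lam = "lam(k := lam k + s)"
  have update: "(\<Sum>j\<in>{1..K}. f j * (?lam j - lam j)) = f k * s" for f :: "nat \<Rightarrow> real"
    using sum_mult_fun_upd_add_diff[OF finite_atLeastAtMost assms] .
  have coeff: "(\<Sum>j\<in>{1..K}. B j (X i) * (?lam j - lam j)) - (u i - u i) = B k (X i) * s" for i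
    using update[of "\<lambda>j. B j (X i)"] by simp
  have "score ?lam u i = score lam u i + s * B k (X i) / c i" for i
    using score_diff[of ?lam u i lam u] coeff[of i] by (simp add: mult.commute)
  then have "(\<Sum>i\<in>I. ((\<Sum>j\<in>{1..K}. B j (X i) * (?lam j - lam j)) - (u i - u i))
             * implied_weights ?lam u i)
      = s * (\<Sum>i\<in>I. B k (X i) * rho_deriv dpsi (score lam u i + s * B k (X i) / c i))"
    unfolding coeff sum_distrib_left by (simp add: mult_ac)
  moreover have "(\<Sum>j\<in>{1..K}. \<delta> j * (\<bar>?lam j\<bar> - \<bar>lam j\<bar>)) = \<delta> k * (\<bar>lam k + s\<bar> - \<bar>lam k\<bar>)"
  proof -
    have "(\<Sum>j\<in>{1..K}. \<delta> j * (\<bar>?lam j\<bar> - \<bar>lam j\<bar>))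
        = (\<Sum>j\<in>{1..K}. if j = k then \<delta> k * (\<bar>lam k + s\<bar> - \<bar>lam k\<bar>) else 0)"
      by (intro sum.cong refl) auto
    then show ?thesis using assms by simp
  qed
  ultimately show ?thesis
    using reduced_dual_diff_ge[of ?lam lam u u, unfolded update[of Bs]] by (simp add: mult.commute)
qed

lemma implied_weights_slackness:
  assumes opt: "reduced_dual_optimal lam u" and "i \<in> I"
  shows "0 \<le> implied_weights lam u i \<and> u i * implied_weights lam u i = 0"
proof -
  have "0 \<le> rho_deriv dpsi (score lam u i - 0 / c i) \<and> u i * rho_deriv dpsi (score lam u i - 0 / c i) = 0"
  proof (rule first_order_nonneg_constraint)
    show "isCont (\<lambda>s. rho_deriv dpsi (score lam u i - s / c i)) 0"
      using c_pos[OF \<open>i \<in> I\<close>] by (intro continuous_intros) auto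
    show "0 \<le> u i"
      using opt \<open>i \<in> I\<close> by (simp add: reduced_dual_optimal_def)
    fix s assume "- u i \<le> s"
    with opt have "\<forall>j\<in>I. 0 \<le> (u(i := u i + s)) j"
      by (simp add: reduced_dual_optimal_def)
    with opt have "reduced_dual lam (u(i := u i + s)) \<le> reduced_dual lam u"
      by (simp add: reduced_dual_optimal_def)
    with reduced_dual_update_u_ge[OF \<open>i \<in> I\<close>, of s lam u]
    show "0 \<le> s * rho_deriv dpsi (score lam u i - s / c i)"
      by linarith
  qed
  then show ?thesis by simp
qed

lemma implied_weights_balance:
  assumes opt: "reduced_dual_optimal lam u" and "k \<in> {1..K}"
  shows "\<bar>bal I B X (implied_weights lam u) k - Bs k\<bar> \<le> \<delta> k
    \<and> lam k * (bal I B X (implied_weights lam u) k - Bs k) = \<bar>lam k\<bar> * \<delta> k"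
proof -
  define \<phi> where
    "\<phi> s = (\<Sum>i\<in>I. B k (X i) * rho_deriv dpsi (score lam u i + s * B k (X i) / c i))" for s
  have "\<phi> 0 = bal I B X (implied_weights lam u) k"
    by (simp add: \<phi>_def bal_def mult.commute)
  moreover have "\<bar>\<phi> 0 - Bs k\<bar> \<le> \<delta> k \<and> lam k * (\<phi> 0 - Bs k) = \<bar>lam k\<bar> * \<delta> k"
  proof (rule first_order_abs_penalty)
    show "isCont \<phi> 0"
      unfolding \<phi>_def by (intro continuous_intros) (auto dest: c_pos)
    show "0 \<le> \<delta> k"
      using \<open>k \<in> {1..K}\<close> by (rule delta_nonneg)
    fix s
    have "reduced_dual (lam(k := lam k + s)) u \<le> reduced_dual lam u"
      using opt by (simp add: reduced_dual_optimal_def)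
    with reduced_dual_update_lam_ge[OF \<open>k \<in> {1..K}\<close>, of s lam u]
    show "s * (\<phi> s - Bs k) \<le> \<delta> k * (\<bar>lam k + s\<bar> - \<bar>lam k\<bar>)"
      unfolding \<phi>_def by (simp add: right_diff_distrib)
  qed
  ultimately show ?thesis by simp
qed

lemma primal_obj_minus_reduced_dual:
  "primal_obj I c psi w - reduced_dual lam u
     = (\<Sum>i\<in>I. c i * (psi (w i) + score lam u i * w i - rho psi dpsi (score lam u i)))
       + (\<Sum>i\<in>I. u i * w i)
       + (\<Sum>k\<in>{1..K}. Bs k * lam k + \<bar>lam k\<bar> * \<delta> k - lam k * bal I B X w k)"
proof -
  have "(\<Sum>i\<in>I. c i * (psi (w i) + score lam u i * w i - rho psi dpsi (score lam u i)))
      = primal_obj I c psi w + (\<Sum>i\<in>I. c i * (score lam u i * w i))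
        - (\<Sum>i\<in>I. c i * rho psi dpsi (score lam u i))"
    by (simp add: primal_obj_def distrib_left right_diff_distrib sum.distrib sum_subtractf)
  then show ?thesis
    by (simp add: sum_score_mult reduced_dual_def sum.distrib sum_subtractf)
qed

lemma implied_weights_feasible:
  "reduced_dual_optimal lam u \<Longrightarrow> primal_feasible I B X Bs K \<delta> (implied_weights lam u)"
  using implied_weights_balance implied_weights_slackness by (simp add: primal_feasible_def)

lemma primal_obj_implied_weights:
  assumes "reduced_dual_optimal lam u"
  shows "primal_obj I c psi (implied_weights lam u) = reduced_dual lam u"
proof -
  have "(\<Sum>i\<in>I. u i * implied_weights lam u i) = 0"
    using implied_weights_slackness[OF assms] by (intro sum.neutral) simp
  moreover have "(\<Sum>k\<in>{1..K}. Bs k * lam k + \<bar>lam k\<bar> * \<delta> k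
      - lam k * bal I B X (implied_weights lam u) k) = 0"
    using implied_weights_balance[OF assms] by (intro sum.neutral) (simp add: algebra_simps)
  ultimately show ?thesis
    using primal_obj_minus_reduced_dual[of "implied_weights lam u" lam u] by (simp add: rho_eq)
qed

lemma primal_solution_eq_implied_weights:
  assumes "primal_solution I c psi B X Bs K \<delta> w" and opt: "reduced_dual_optimal lam u"
    and "i \<in> I"
  shows "w i = implied_weights lam u i"
proof -
  define slack where
    "slack j = c j * (psi (w j) + score lam u j * w j - rho psi dpsi (score lam u j))" for j
  have feasible: "primal_feasible I B X Bs K \<delta> w"
    and "primal_obj I c psi w \<le> primal_obj I c psi (implied_weights lam u)"
    using assms(1) implied_weights_feasible[OF opt] by (auto simp: primal_solution_def)
  then have gap: "primal_obj I c psi w - reduced_dual lam u \<le> 0"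
    by (simp add: primal_obj_implied_weights[OF opt])
  have slack_nonneg: "0 \<le> slack j" if "j \<in> I" for j
    using c_pos[OF that] rho_le[of "score lam u j" "w j"] by (simp add: slack_def)
  have "0 \<le> (\<Sum>j\<in>I. u j * w j)"
    using opt feasible by (intro sum_nonneg) (simp add: reduced_dual_optimal_def primal_feasible_def)
  moreover have "0 \<le> (\<Sum>k\<in>{1..K}. Bs k * lam k + \<bar>lam k\<bar> * \<delta> k - lam k * bal I B X w k)"
  proof (rule sum_nonneg)
    fix k assume "k \<in> {1..K}"
    with feasible have "\<bar>bal I B X w k - Bs k\<bar> \<le> \<delta> k"
      by (simp add: primal_feasible_def)
    then have "\<bar>lam k\<bar> * \<bar>bal I B X w k - Bs k\<bar> \<le> \<bar>lam k\<bar> * \<delta> k"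
      by (simp add: mult_left_mono)
    moreover have "lam k * (bal I B X w k - Bs k) \<le> \<bar>lam k\<bar> * \<bar>bal I B X w k - Bs k\<bar>"
      by (metis abs_ge_self abs_mult)
    ultimately show "0 \<le> Bs k * lam k + \<bar>lam k\<bar> * \<delta> k - lam k * bal I B X w k"
      by (simp add: algebra_simps)
  qed
  ultimately have "(\<Sum>j\<in>I. slack j) \<le> 0"
    using gap primal_obj_minus_reduced_dual[of w lam u] by (simp add: slack_def)
  then have "slack i = 0"
    using sum_nonneg_eq_0_iff[OF finite_I] slack_nonneg sum_nonneg[of I slack] \<open>i \<in> I\<close>
    by (meson order_antisym)
  with c_pos[OF \<open>i \<in> I\<close>] have "psi (w i) + score lam u i * w i = rho psi dpsi (score lam u i)"
    by (simp add: slack_def)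
  then show ?thesis
    by (rule rho_attained_only_at_rho_deriv)
qed

lemma implied_weights_eq_pos_part:
  assumes opt: "reduced_dual_optimal lam u" and "i \<in> I"
  defines "v \<equiv> (\<Sum>k\<in>{1..K}. B k (X i) * lam k) / c i"
  shows "implied_weights lam u i = rho_deriv dpsi v * of_bool (0 < rho_deriv dpsi v)"
proof (cases "u i = 0")
  case True
  then have "score lam u i = v" by (simp add: score_def v_def)
  with implied_weights_slackness[OF opt \<open>i \<in> I\<close>] show ?thesis by auto
next
  case False
  with implied_weights_slackness[OF opt \<open>i \<in> I\<close>] opt \<open>i \<in> I\<close>
  have "implied_weights lam u i = 0" and "0 < u i"
    by (auto simp: reduced_dual_optimal_def less_le)
  with c_pos[OF \<open>i \<in> I\<close>] have "score lam u i < v"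
    by (simp add: score_def v_def divide_strict_right_mono)
  then have "rho_deriv dpsi v < implied_weights lam u i"
    by (simp add: rho_deriv_less_iff)
  with \<open>implied_weights lam u i = 0\<close> show ?thesis by simp
qed

end

locale balancing_problem =
  weighting_problem psi dpsi "study_z Q S Z z" c B X Bs K \<delta>
  for psi dpsi :: "real \<Rightarrow> real" and Q :: "'u set" and S :: "'u \<Rightarrow> bool"
    and Z :: "'u \<Rightarrow> nat" and z :: nat and c :: "'u \<Rightarrow> real" and B :: "nat \<Rightarrow> 'x \<Rightarrow> real"
    and X :: "'u \<Rightarrow> 'x" and Bs :: "nat \<Rightarrow> real" and K :: nat and \<delta> :: "nat \<Rightarrow> real" +
  assumes finite_Q: "finite Q"
begin

lemma study_z_subset: "study_z Q S Z z \<subseteq> Q"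
  by (auto simp: study_z_def)

lemma l1_obj_eq: "l1_obj Q S Z z c psi dpsi B X Bs K \<delta> u lam = - reduced_dual lam u"
proof -
  have "(\<Sum>i\<in>Q. - (of_bool (Z i = z) * of_bool (S i)) * c i
            * rho psi dpsi (((\<Sum>k\<in>{1..K}. B k (X i) * lam k) - u i) / c i))
      = (\<Sum>i\<in>Q. - (if S i \<and> Z i = z then c i * rho psi dpsi (score lam u i) else 0))"
    by (intro sum.cong refl) (auto simp: score_def)
  also have "\<dots> = - (\<Sum>i\<in>Q. if S i \<and> Z i = z then c i * rho psi dpsi (score lam u i) else 0)"
    by (rule sum_negf)
  also have "\<dots> = - (\<Sum>i\<in>study_z Q S Z z. c i * rho psi dpsi (score lam u i))"
    using finite_Q by (simp add: sum.inter_filter study_z_def)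
  finally show ?thesis
    by (simp add: l1_obj_def reduced_dual_def)
qed

lemma l1_solution_iff:
  "l1_solution Q S Z z c psi dpsi B X Bs K \<delta> u lam
     \<longleftrightarrow> (\<forall>i\<in>Q. 0 \<le> u i) \<and> reduced_dual_optimal lam u"
proof
  assume l1: "l1_solution Q S Z z c psi dpsi B X Bs K \<delta> u lam"
  have "reduced_dual lam' u' \<le> reduced_dual lam u"
    if "\<forall>i\<in>study_z Q S Z z. 0 \<le> u' i" for lam' and u' :: "'u \<Rightarrow> real"
  proof -
    let ?u = "\<lambda>i. if i \<in> study_z Q S Z z then u' i else 0"
    have "reduced_dual lam' ?u \<le> reduced_dual lam u"
      using l1 that by (simp add: l1_solution_def l1_obj_eq)
    moreover have "reduced_dual lam' ?u = reduced_dual lam' u'"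
      by (rule reduced_dual_cong) simp
    ultimately show ?thesis by simp
  qed
  moreover have "\<forall>i\<in>Q. 0 \<le> u i"
    using l1 by (simp add: l1_solution_def)
  ultimately show "(\<forall>i\<in>Q. 0 \<le> u i) \<and> reduced_dual_optimal lam u"
    using study_z_subset unfolding reduced_dual_optimal_def by blast
next
  assume optimal: "(\<forall>i\<in>Q. 0 \<le> u i) \<and> reduced_dual_optimal lam u"
  show "l1_solution Q S Z z c psi dpsi B X Bs K \<delta> u lam"
    unfolding l1_solution_def l1_obj_eq
  proof (intro conjI allI impI)
    show "\<forall>i\<in>Q. 0 \<le> u i" using optimal by simp
    fix u' :: "'u \<Rightarrow> real" and lam' assume "\<forall>i\<in>Q. 0 \<le> u' i"
    with study_z_subset have "\<forall>i\<in>study_z Q S Z z. 0 \<le> u' i" by blast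
    with optimal show "- reduced_dual lam u \<le> - reduced_dual lam' u'"
      by (simp add: reduced_dual_optimal_def)
  qed
qed

lemma l1_solution_iff_dual_solution:
  assumes "\<forall>i\<in>Q. 0 \<le> u i"
  shows "l1_solution Q S Z z c psi dpsi B X Bs K \<delta> u lam
    \<longleftrightarrow> dual_solution (study_z Q S Z z) c psi B X Bs K \<delta>
          (\<lambda>k. max (lam k) 0) (\<lambda>k. max (- lam k) 0) u"
proof -
  from assms study_z_subset have "\<forall>i\<in>study_z Q S Z z. 0 \<le> u i" by blast
  with assms show ?thesis
    by (simp add: l1_solution_iff dual_solution_iff dual_fun_pos_neg_parts
        dual_feasible_pos_neg_parts reduced_dual_optimal_def)
qed

lemma dual_solution_imp_l1_solution:
  assumes "dual_solution (study_z Q S Z z) c psi B X Bs K \<delta> \<alpha> \<beta> u"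
  shows "l1_solution Q S Z z c psi dpsi B X Bs K \<delta>
    (\<lambda>i. if i \<in> study_z Q S Z z then u i else 0) (\<lambda>k. \<alpha> k - \<beta> k)"
proof -
  have feasible: "dual_feasible (study_z Q S Z z) K \<alpha> \<beta> u"
    and bound: "\<And>lam u'. \<forall>i\<in>study_z Q S Z z. 0 \<le> u' i \<Longrightarrow>
      ereal (reduced_dual lam u') \<le> dual_fun (study_z Q S Z z) c psi B X Bs K \<delta> \<alpha> \<beta> u"
    using assms by (simp_all add: dual_solution_iff)
  have "reduced_dual lam u' \<le> reduced_dual (\<lambda>k. \<alpha> k - \<beta> k) u"
    if "\<forall>i\<in>study_z Q S Z z. 0 \<le> u' i" for lam u'
    using order_trans[OF bound[OF that] dual_fun_le_reduced_dual[OF feasible]] by simp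
  moreover have "reduced_dual (\<lambda>k. \<alpha> k - \<beta> k) (\<lambda>i. if i \<in> study_z Q S Z z then u i else 0)
      = reduced_dual (\<lambda>k. \<alpha> k - \<beta> k) u"
    by (rule reduced_dual_cong) simp
  moreover have "\<forall>i\<in>Q. 0 \<le> (if i \<in> study_z Q S Z z then u i else 0)"
    using feasible by (simp add: dual_feasible_def)
  ultimately show ?thesis
    using feasible by (simp add: l1_solution_iff reduced_dual_optimal_def dual_feasible_def)
qed

lemma SUP_dual_fun_eq:
  "(SUP p\<in>{(\<alpha>, \<beta>, u). dual_feasible (study_z Q S Z z) K \<alpha> \<beta> u}.
      dual_fun (study_z Q S Z z) c psi B X Bs K \<delta> (fst p) (fst (snd p)) (snd (snd p)))
   = - (INF p\<in>{(u, lam). \<forall>i\<in>Q. 0 \<le> u i}.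
          ereal (l1_obj Q S Z z c psi dpsi B X Bs K \<delta> (fst p) (snd p)))"
proof -
  have "- (INF p\<in>{(u, lam). \<forall>i\<in>Q. 0 \<le> u i}.
          ereal (l1_obj Q S Z z c psi dpsi B X Bs K \<delta> (fst p) (snd p)))
      = (SUP p\<in>{(u, lam). \<forall>i\<in>Q. 0 \<le> u i}. ereal (reduced_dual (snd p) (fst p)))"
    using ereal_INF_uminus_eq[of "\<lambda>p. ereal (reduced_dual (snd p) (fst p))"]
    by (simp add: l1_obj_eq)
  moreover have "(SUP p\<in>{(\<alpha>, \<beta>, u). dual_feasible (study_z Q S Z z) K \<alpha> \<beta> u}.
      dual_fun (study_z Q S Z z) c psi B X Bs K \<delta> (fst p) (fst (snd p)) (snd (snd p)))
    = (SUP p\<in>{(u, lam). \<forall>i\<in>Q. 0 \<le> u i}. ereal (reduced_dual (snd p) (fst p)))"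
  proof (rule SUP_eq)
    fix p :: "(nat \<Rightarrow> real) \<times> (nat \<Rightarrow> real) \<times> ('u \<Rightarrow> real)"
    assume "p \<in> {(\<alpha>, \<beta>, u). dual_feasible (study_z Q S Z z) K \<alpha> \<beta> u}"
    then obtain \<alpha> \<beta> u where p: "p = (\<alpha>, \<beta>, u)" and feasible: "dual_feasible (study_z Q S Z z) K \<alpha> \<beta> u"
      by auto
    let ?u = "\<lambda>i. if i \<in> study_z Q S Z z then u i else 0"
    have "reduced_dual (\<lambda>k. \<alpha> k - \<beta> k) ?u = reduced_dual (\<lambda>k. \<alpha> k - \<beta> k) u"
      by (rule reduced_dual_cong) simp
    with feasible dual_fun_le_reduced_dual[OF feasible]
    show "\<exists>q\<in>{(u, lam). \<forall>i\<in>Q. 0 \<le> u i}.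
        dual_fun (study_z Q S Z z) c psi B X Bs K \<delta> (fst p) (fst (snd p)) (snd (snd p))
        \<le> ereal (reduced_dual (snd q) (fst q))"
      unfolding p by (intro bexI[of _ "(?u, \<lambda>k. \<alpha> k - \<beta> k)"]) (auto simp: dual_feasible_def)
  next
    fix q :: "('u \<Rightarrow> real) \<times> (nat \<Rightarrow> real)"
    assume "q \<in> {(u, lam). \<forall>i\<in>Q. 0 \<le> u i}"
    then obtain u lam where q: "q = (u, lam)" and "\<forall>i\<in>Q. 0 \<le> u i"
      by auto
    with study_z_subset have "dual_feasible (study_z Q S Z z) K (\<lambda>k. max (lam k) 0) (\<lambda>k. max (- lam k) 0) u"
      by (auto intro: dual_feasible_pos_neg_parts)
    then show "\<exists>p\<in>{(\<alpha>, \<beta>, u). dual_feasible (study_z Q S Z z) K \<alpha> \<beta> u}.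
        ereal (reduced_dual (snd q) (fst q))
        \<le> dual_fun (study_z Q S Z z) c psi B X Bs K \<delta> (fst p) (fst (snd p)) (snd (snd p))"
      unfolding q
      by (intro bexI[of _ "(\<lambda>k. max (lam k) 0, \<lambda>k. max (- lam k) 0, u)"])
        (auto simp: dual_fun_pos_neg_parts)
  qed
  ultimately show ?thesis by simp
qed

lemma l1_solution_primal_weights:
  assumes "primal_solution (study_z Q S Z z) c psi B X Bs K \<delta> w"
    and "l1_solution Q S Z z c psi dpsi B X Bs K \<delta> u lam" and "i \<in> study_z Q S Z z"
  shows "w i = rho_deriv dpsi ((\<Sum>k\<in>{1..K}. B k (X i) * lam k) / c i)
    * of_bool (rho_deriv dpsi ((\<Sum>k\<in>{1..K}. B k (X i) * lam k) / c i) > 0)"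
proof -
  have "reduced_dual_optimal lam u"
    using assms(2) by (simp add: l1_solution_iff)
  with assms(1,3) show ?thesis
    by (simp add: primal_solution_eq_implied_weights implied_weights_eq_pos_part)
qed

end

theorem theoremS2:
  fixes Q :: "'u set" and S :: "'u \<Rightarrow> bool" and Z :: "'u \<Rightarrow> nat" and z :: nat
    and X :: "'u \<Rightarrow> 'x" and B :: "nat \<Rightarrow> 'x \<Rightarrow> real" and K :: nat
    and \<delta> :: "nat \<Rightarrow> real" and c :: "'u \<Rightarrow> real"
    and psi dpsi :: "real \<Rightarrow> real"
  assumes finQ: "finite Q"
    and z01: "z \<in> {0, 1}"
    and Z01: "\<forall>i\<in>Q. S i \<longrightarrow> Z i \<in> {0, 1}"
    and K1: "K \<ge> 1"
    and B1: "\<forall>x. B 1 x = 1"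
    and delta_nonneg: "\<forall>k\<in>{1..K}. \<delta> k \<ge> 0"
    and delta1: "\<delta> 1 = 0"
    and c_pos: "\<forall>i\<in>Q. c i > 0"
    and psi_convex: "convex_on UNIV psi"
    and psi_deriv: "\<forall>x. (psi has_real_derivative dpsi x) (at x)"
    and psi_twice: "\<forall>x. dpsi differentiable (at x)"
    and dpsi_inv: "bij dpsi"
  shows
    "(\<forall>u lam. (\<forall>i\<in>Q. u i \<ge> 0) \<longrightarrow>
        (l1_solution Q S Z z c psi dpsi B X (Bstar Q S B X) K \<delta> u lam \<longleftrightarrow>
         dual_solution (study_z Q S Z z) c psi B X (Bstar Q S B X) K \<delta>
           (\<lambda>k. max (lam k) 0) (\<lambda>k. max (- lam k) 0) u))
     \<and> (\<forall>\<alpha> \<beta> u. dual_solution (study_z Q S Z z) c psi B X (Bstar Q S B X) K \<delta> \<alpha> \<beta> u \<longrightarrow>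
          l1_solution Q S Z z c psi dpsi B X (Bstar Q S B X) K \<delta>
            (\<lambda>i. if i \<in> study_z Q S Z z then u i else 0) (\<lambda>k. \<alpha> k - \<beta> k))
     \<and> (SUP p\<in>{(\<alpha>, \<beta>, u). dual_feasible (study_z Q S Z z) K \<alpha> \<beta> u}.
           dual_fun (study_z Q S Z z) c psi B X (Bstar Q S B X) K \<delta>
             (fst p) (fst (snd p)) (snd (snd p)))
        = - (INF p\<in>{(u, lam). \<forall>i\<in>Q. u i \<ge> 0}.
               ereal (l1_obj Q S Z z c psi dpsi B X (Bstar Q S B X) K \<delta> (fst p) (snd p)))
     \<and> (\<forall>w u lam.
          primal_solution (study_z Q S Z z) c psi B X (Bstar Q S B X) K \<delta> w \<and>
          l1_solution Q S Z z c psi dpsi B X (Bstar Q S B X) K \<delta> u lam \<longrightarrow>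
          (\<forall>i\<in>study_z Q S Z z.
             w i = rho_deriv dpsi ((\<Sum>k\<in>{1..K}. B k (X i) * lam k) / c i)
                   * of_bool (rho_deriv dpsi ((\<Sum>k\<in>{1..K}. B k (X i) * lam k) / c i) > 0)))"
proof -
  interpret balancing_problem psi dpsi Q S Z z c B X "Bstar Q S B X" K \<delta>
    by unfold_locales (use assms in \<open>auto simp: study_z_def\<close>)
  show ?thesis
    using l1_solution_iff_dual_solution dual_solution_imp_l1_solution SUP_dual_fun_eq
      l1_solution_primal_weights
    by blast
qed

end
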